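(* Assume the tail assumption described in the context. Then for $k=1,2$, \[ \operatorname*{ess\,sup}_{a\ge\log_p2}\{\alpha^-_k(a)-a\}\le0,\qquad \operatorname*{ess\,sup}_{a\ge\log_p2}\{\alpha^+_k(a)-a\}\le0. \]
   Context: For $k=1,2$, $F^0_k,F^1_k$ are distribution functions on $\mathbb{R}$ (possibly depending on an index $p\to\infty$) with Lebesgue densities $f^0_k,f^1_k$, and $\ell_k=\log(f^1_k/f^0_k)$. Tail assumption: there exist measurable $\alpha^-_k,\alpha^+_k:\mathbb{R}\to\mathbb{R}$ such that $\alpha^-_k(a)\vee\alpha^+_k(a)>0$ on a set of positive Lebesgue measure and $\lim_{p\to\infty}\ell_k\{(F^0_k)^{-1}(p^{-a})\}/\log p=\alpha^-_k(a)$, $\lim_{p\to\infty}\ell_k\{(F^0_k)^{-1}(1-p^{-a})\}/\log p=\alpha^+_k(a)$, uniformly in $a\ge\log_p2$. Essential suprema are with respect to Lebesgue measure; $x\vee y=\max(x,y)$. *)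

theory Defs
  imports "HOL-Analysis.Analysis" "HOL-Probability.Essential_Supremum"
begin

definition cdf_with_density :: "(real \<Rightarrow> real) \<Rightarrow> (real \<Rightarrow> real) \<Rightarrow> bool" where
  "cdf_with_density F f \<longleftrightarrow>
     f \<in> borel_measurable lborel \<and> (\<forall>x. 0 \<le> f x) \<and>
     integrable lborel f \<and> integral\<^sup>L lborel f = 1 \<and>
     (\<forall>x. F x = set_lebesgue_integral lborel {..x} f)"

definition quantile :: "(real \<Rightarrow> real) \<Rightarrow> real \<Rightarrow> real" where
  "quantile F u = Inf {x. u \<le> F x}"

definition llr :: "(real \<Rightarrow> real) \<Rightarrow> (real \<Rightarrow> real) \<Rightarrow> real \<Rightarrow> ereal" where
  "llr f0 f1 x =
     (if 0 < f0 x \<and> 0 < f1 x then ereal (ln (f1 x / f0 x))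
      else if 0 < f0 x then -\<infinity>
      else if 0 < f1 x then \<infinity> else 0)"

definition unif_tail_limit :: "(nat \<Rightarrow> real \<Rightarrow> ereal) \<Rightarrow> (real \<Rightarrow> real) \<Rightarrow> bool" where
  "unif_tail_limit g \<alpha> \<longleftrightarrow>
     (\<forall>\<epsilon>>0. \<exists>P. \<forall>p\<ge>P. \<forall>a\<ge>log (real p) 2.
        \<exists>r. g p a = ereal r \<and> \<bar>r / ln (real p) - \<alpha> a\<bar> \<le> \<epsilon>)"

end

theory Submission
  imports Defs "HOL-Probability.Weak_Convergence"
begin

text \<open>If the essential supremum were positive, then \<open>\<alpha>(a) > a + \<delta>\<close> on a Borel set
  \<open>A \<subseteq> [log\<^sub>p 2, M]\<close> of positive measure. By the uniform tail limit, for large \<open>q\<close> the likelihood ratio \<open>f\<^sub>1/f\<^sub>0\<close> at the quantile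
  \<open>Q\<^sub>0(q\<^sup>-\<^sup>a)\<close> (resp. \<open>Q\<^sub>0(1 - q\<^sup>-\<^sup>a)\<close>) is at least \<open>q\<^sup>a\<close> for every \<open>a \<in> A\<close>. Since \<open>Q\<^sub>0(U)\<close> has
  density \<open>f\<^sub>0\<close> for uniform \<open>U\<close>, \<open>\<integral>\<^sub>0\<^sup>1 (f\<^sub>1/f\<^sub>0)(Q\<^sub>0(u)) du \<le> \<integral> f\<^sub>1 = 1\<close>; the substitution
  \<open>u = q\<^sup>-\<^sup>a\<close>, \<open>|du| = q\<^sup>-\<^sup>a ln q da\<close>, bounds this integral below by \<open>\<integral>\<^sub>A q\<^sup>a q\<^sup>-\<^sup>a ln q da =
  ln q \<cdot> |A|\<close>, which is unbounded in \<open>q\<close>.\<close>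

lemma cdf_with_density_cdf_distribution:
  assumes "cdf_with_density F f"
  shows "cdf_distribution (density lborel f)" and "cdf (density lborel f) = F"
proof -
  have [measurable]: "f \<in> borel_measurable lborel" and nn: "\<And>x. 0 \<le> f x"
    and int: "integrable lborel f" and one: "integral\<^sup>L lborel f = 1"
    and F: "\<And>x. F x = set_lebesgue_integral lborel {..x} f"
    using assms by (auto simp: cdf_with_density_def)
  have emeasure_eq: "emeasure (density lborel f) S = ennreal (\<integral>y. f y * indicator S y \<partial>lborel)"
    if [measurable]: "S \<in> sets borel" for S
  proof -
    have "emeasure (density lborel f) S = (\<integral>\<^sup>+ y. ennreal (f y * indicator S y) \<partial>lborel)"
      by (simp add: emeasure_density nn_integral_set_ennreal[symmetric] indicator_mult_ennreal mult.commute)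
    also have "\<dots> = ennreal (\<integral>y. f y * indicator S y \<partial>lborel)"
      using integrable_mult_indicator[of S lborel f] int
      by (intro nn_integral_eq_integral) (auto simp: mult.commute nn)
    finally show ?thesis .
  qed
  have "prob_space (density lborel f)"
    by (rule prob_spaceI) (use emeasure_eq[of UNIV] one in simp)
  then show "cdf_distribution (density lborel f)"
    by (simp add: cdf_distribution_def real_distribution_def real_distribution_axioms_def)
  show "cdf (density lborel f) = F"
    by (intro ext) (simp add: cdf_def2 measure_def emeasure_eq F set_lebesgue_integral_def mult.commute nn)
qed

lemma quantile_measurable:
  assumes "cdf_with_density F f"
  shows "quantile F \<in> borel_measurable (restrict_space borel {0<..<1})"
proof -
  interpret cdf_distribution "density lborel f"
    by (rule cdf_with_density_cdf_distribution(1)[OF assms])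
  show ?thesis
    using measurable_CI
    unfolding cdf_with_density_cdf_distribution(2)[OF assms] quantile_def[abs_def] .
qed

lemma nn_integral_quantile:
  assumes F: "cdf_with_density F f" and [measurable]: "h \<in> borel_measurable borel"
  shows "(\<integral>\<^sup>+ u. h (quantile F u) * indicator {0<..<1::real} u \<partial>lborel) = (\<integral>\<^sup>+ x. f x * h x \<partial>lborel)"
proof -
  interpret cdf_distribution "density lborel f"
    by (rule cdf_with_density_cdf_distribution(1)[OF F])
  have quantile_eq: "quantile F = I"
    unfolding cdf_with_density_cdf_distribution(2)[OF F, symmetric] quantile_def[abs_def] ..
  have [measurable]: "f \<in> borel_measurable lborel"
    using F by (simp add: cdf_with_density_def)
  have [measurable]: "I \<in> measurable (restrict_space lborel {0<..<1}) borel"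
    using measurable_CI by (simp add: measurable_def space_restrict_space sets_restrict_space)
  have "(\<integral>\<^sup>+ u. h (I u) * indicator {0<..<1::real} u \<partial>lborel)
      = (\<integral>\<^sup>+ u. h (I u) \<partial>restrict_space lborel {0<..<1})"
    by (subst nn_integral_restrict_space) auto
  also have "\<dots> = (\<integral>\<^sup>+ x. h x \<partial>distr (restrict_space lborel {0<..<1}) borel I)"
    by (subst nn_integral_distr) auto
  also have "\<dots> = (\<integral>\<^sup>+ x. f x * h x \<partial>lborel)"
    by (simp add: distr_I_eq_M nn_integral_density)
  finally show ?thesis
    by (simp add: quantile_eq)
qed

definition likelihood_ratio :: "(real \<Rightarrow> real) \<Rightarrow> (real \<Rightarrow> real) \<Rightarrow> real \<Rightarrow> real" where
  "likelihood_ratio f0 f1 x = (if 0 < f0 x then f1 x / f0 x else 0)"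

lemma exp_le_likelihood_ratio_if_llr_ge:
  assumes "llr f0 f1 x = ereal r" and "0 < c" and "c \<le> r"
  shows "exp c \<le> likelihood_ratio f0 f1 x"
proof -
  have pos: "0 < f0 x" "0 < f1 x" and "r = ln (f1 x / f0 x)"
    using assms by (auto simp: llr_def split: if_splits)
  moreover have "0 < f1 x / f0 x"
    using pos by simp
  ultimately have "exp c \<le> f1 x / f0 x"
    using assms(3) by (metis exp_le_cancel_iff exp_ln)
  then show ?thesis
    using pos by (simp add: likelihood_ratio_def)
qed

lemma nn_integral_likelihood_ratio_quantile_le_1:
  assumes dens0: "cdf_with_density F0 f0" and dens1: "cdf_with_density F1 f1"
  shows "(\<integral>\<^sup>+ u. ennreal (likelihood_ratio f0 f1 (quantile F0 u)) * indicator {0<..<1} u \<partial>lborel) \<le> 1"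
proof -
  have [measurable]: "f0 \<in> borel_measurable borel" "f1 \<in> borel_measurable borel"
    and nn: "\<And>x. 0 \<le> f0 x" "\<And>x. 0 \<le> f1 x"
    using dens0 dens1 by (auto simp: cdf_with_density_def)
  have "(\<integral>\<^sup>+ u. ennreal (likelihood_ratio f0 f1 (quantile F0 u)) * indicator {0<..<1} u \<partial>lborel)
      = (\<integral>\<^sup>+ x. ennreal (f0 x) * ennreal (likelihood_ratio f0 f1 x) \<partial>lborel)"
    by (rule nn_integral_quantile[OF dens0]) (simp add: likelihood_ratio_def[abs_def])
  also have "\<dots> \<le> (\<integral>\<^sup>+ x. ennreal (f1 x) \<partial>lborel)"
    by (intro nn_integral_mono)
      (auto simp: likelihood_ratio_def ennreal_mult[symmetric] nn)
  also have "\<dots> = 1"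
    using dens1 nn_integral_eq_integral[of lborel f1] by (auto simp: cdf_with_density_def)
  finally show ?thesis .
qed

lemma nn_integral_unit_interval_reflect:
  fixes k :: "real \<Rightarrow> real"
  assumes [measurable]: "k \<in> borel_measurable borel"
  shows "(\<integral>\<^sup>+ u. ennreal (k (1 - u) * indicator {0<..<1} u) \<partial>lborel)
       = (\<integral>\<^sup>+ u. ennreal (k u * indicator {0<..<1} u) \<partial>lborel)"
  using nn_integral_real_affine[of "\<lambda>u. ennreal (k u * indicator {0<..<1} u)" "-1" 1]
  by (simp add: indicator_def conj_commute)

lemma nn_integral_upper_tail_substitution:
  fixes k :: "real \<Rightarrow> real"
  assumes [measurable]: "k \<in> borel_measurable borel" and q: "1 < q" and "0 < L" "L \<le> M"
  shows "(\<integral>\<^sup>+ t. ennreal (k (1 - q powr -t) * (q powr -t * ln q) * indicator {L..M} t) \<partial>lborel)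
     \<le> (\<integral>\<^sup>+ u. ennreal (k u * indicator {0<..<1} u) \<partial>lborel)"
proof -
  let ?g = "\<lambda>t. 1 - q powr -t"
  have "(\<integral>\<^sup>+ t. ennreal (k (?g t) * (q powr -t * ln q) * indicator {L..M} t) \<partial>lborel)
     = (\<integral>\<^sup>+ u. ennreal (k u * indicator {?g L..?g M} u) \<partial>lborel)"
  proof (rule nn_integral_substitution[symmetric])
    show "(?g has_real_derivative q powr -t * ln q) (at t)" for t
      using q by (auto intro!: derivative_eq_intros simp: powr_minus)
    show "continuous_on {L..M} (\<lambda>t. q powr -t * ln q)"
      using q by (intro continuous_intros) auto
  qed (use q \<open>L \<le> M\<close> in \<open>auto simp: set_borel_measurable_def\<close>)
  also have "\<dots> \<le> (\<integral>\<^sup>+ u. ennreal (k u * indicator {0<..<1} u) \<partial>lborel)"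
  proof (intro nn_integral_mono)
    have "q powr -L < 1" "0 < q powr -M"
      using q \<open>0 < L\<close> by (auto simp: powr_less_one)
    then have "{?g L..?g M} \<subseteq> {0<..<1}"
      by (auto simp del: powr_gt_zero)
    then show "ennreal (k u * indicator {?g L..?g M} u) \<le> ennreal (k u * indicator {0<..<1} u)" for u
      by (cases "u \<in> {?g L..?g M}") (auto simp: indicator_def)
  qed
  finally show ?thesis .
qed

lemma nn_integral_lower_tail_substitution:
  fixes k :: "real \<Rightarrow> real"
  assumes [measurable]: "k \<in> borel_measurable borel" and "1 < q" "0 < L" "L \<le> M"
  shows "(\<integral>\<^sup>+ t. ennreal (k (q powr -t) * (q powr -t * ln q) * indicator {L..M} t) \<partial>lborel)
     \<le> (\<integral>\<^sup>+ u. ennreal (k u * indicator {0<..<1} u) \<partial>lborel)"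
  using nn_integral_upper_tail_substitution[of "\<lambda>u. k (1 - u)"] assms
  by (simp add: nn_integral_unit_interval_reflect)

lemma excess_set_subset_UN:
  fixes \<alpha> :: "real \<Rightarrow> real"
  shows "{a. L \<le> a \<and> a < \<alpha> a}
    \<subseteq> (\<Union>n::nat. {a. L \<le> a \<and> a \<le> L + real n \<and> a + 1 / (real n + 1) < \<alpha> a})"
proof
  fix a assume "a \<in> {a. L \<le> a \<and> a < \<alpha> a}"
  then have "L \<le> a" "a < \<alpha> a" by auto
  obtain n1 :: nat where "a - L \<le> real n1"
    using real_arch_simple by blast
  obtain n2 :: nat where "1 / (\<alpha> a - a) < real n2"
    using reals_Archimedean2 by blast
  define n where "n = max n1 n2"
  have "1 / (\<alpha> a - a) < real n + 1"
    using \<open>1 / (\<alpha> a - a) < real n2\<close> by (simp add: n_def)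
  then have "1 / (real n + 1) < \<alpha> a - a"
    using \<open>a < \<alpha> a\<close> by (simp add: field_simps)
  moreover have "a \<le> L + real n"
    using \<open>a - L \<le> real n1\<close> by (simp add: n_def)
  ultimately show "a \<in> (\<Union>n. {a. L \<le> a \<and> a \<le> L + real n \<and> a + 1 / (real n + 1) < \<alpha> a})"
    using \<open>L \<le> a\<close> by auto
qed

lemma excess_set_if_not_esssup_le_0:
  fixes \<alpha> :: "real \<Rightarrow> real"
  assumes [measurable]: "\<alpha> \<in> borel_measurable lebesgue"
    and not_le: "\<not> esssup (restrict_space lebesgue {L..}) (\<lambda>a. ereal (\<alpha> a - a)) \<le> 0"
  obtains A \<delta> M where "A \<in> sets lborel" "A \<subseteq> {L..M}" "emeasure lborel A \<noteq> 0"
    and "0 < \<delta>" "\<And>a. a \<in> A \<Longrightarrow> a + \<delta> < \<alpha> a"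
proof -
  have [measurable]: "(\<lambda>x::real. x) \<in> borel_measurable lebesgue"
    by (rule measurable_completion) simp
  define B where "B n = {a. L \<le> a \<and> a \<le> L + real n \<and> a + 1 / (real n + 1) < \<alpha> a}" for n :: nat
  have B_sets: "B n \<in> sets lebesgue" for n
  proof -
    have "{a \<in> space lebesgue. L \<le> a \<and> a \<le> L + real n \<and> a + 1 / (real n + 1) < \<alpha> a} \<in> sets lebesgue"
      by measurable
    then show ?thesis
      by (simp add: B_def)
  qed
  have cover: "{a. L \<le> a \<and> a < \<alpha> a} \<subseteq> (\<Union>n. B n)"
    unfolding B_def by (rule excess_set_subset_UN)
  have "\<exists>n. B n \<notin> null_sets lebesgue"
  proof (rule ccontr)
    assume "\<not> (\<exists>n. B n \<notin> null_sets lebesgue)"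
    then have "(\<Union>n. B n) \<in> null_sets lebesgue"
      by auto
    then have "AE a in lebesgue. a \<in> {L..} \<longrightarrow> ereal (\<alpha> a - a) \<le> 0"
      by (rule AE_I') (use cover in auto)
    then have "AE a in restrict_space lebesgue {L..}. ereal (\<alpha> a - a) \<le> 0"
      by (subst AE_restrict_space_iff) auto
    moreover have "(\<lambda>a. ereal (\<alpha> a - a)) \<in> borel_measurable (restrict_space lebesgue {L..})"
      by (intro measurable_restrict_space1) measurable
    ultimately have "esssup (restrict_space lebesgue {L..}) (\<lambda>a. ereal (\<alpha> a - a)) \<le> 0"
      by (intro esssup_I)
    with not_le show False ..
  qed
  then obtain n where "B n \<notin> null_sets lebesgue" ..
  define A where "A = main_part lborel (B n)"
  have A_sets: "A \<in> sets lborel"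
    using main_part_sets[OF B_sets[of n]] by (simp add: A_def)
  have "A \<subseteq> B n"
    using main_part_null_part_Un[OF B_sets[of n]] unfolding A_def by blast
  then have "A \<subseteq> {L..L + real n}" "\<And>a. a \<in> A \<Longrightarrow> a + 1 / (real n + 1) < \<alpha> a"
    by (auto simp: B_def)
  moreover have "emeasure lborel A \<noteq> 0"
    using \<open>B n \<notin> null_sets lebesgue\<close> B_sets[of n] by (simp add: A_def null_sets_def)
  ultimately show thesis
    using A_sets by (intro that) auto
qed

lemma likelihood_ratio_quantile_measurable:
  assumes dens0: "cdf_with_density F0 f0" and dens1: "cdf_with_density F1 f1"
  shows "(\<lambda>u. if u \<in> {0<..<1} then likelihood_ratio f0 f1 (quantile F0 u) else 0) \<in> borel_measurable borel"
proof (subst measurable_If_restrict_space_iff)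
  have [measurable]: "f0 \<in> borel_measurable borel" "f1 \<in> borel_measurable borel"
    using dens0 dens1 by (auto simp: cdf_with_density_def)
  have "likelihood_ratio f0 f1 \<in> borel_measurable borel"
    unfolding likelihood_ratio_def[abs_def] by measurable
  then show "(\<lambda>u. likelihood_ratio f0 f1 (quantile F0 u)) \<in> borel_measurable (restrict_space borel {u. u \<in> {0<..<1}})
    \<and> (\<lambda>u. 0) \<in> borel_measurable (restrict_space borel {u. u \<notin> {0<..<1}})"
    unfolding Collect_mem_eq using measurable_compose[OF quantile_measurable[OF dens0]] by simp
qed simp

lemma ln_mult_measure_le_1:
  fixes \<phi> :: "real \<Rightarrow> real"
  assumes dens0: "cdf_with_density F0 f0" and dens1: "cdf_with_density F1 f1"
    and A: "A \<in> sets lborel" "A \<subseteq> {L..M}" and q: "1 < q"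
    and substitution: "\<And>k. k \<in> borel_measurable borel \<Longrightarrow>
      (\<integral>\<^sup>+ t. ennreal (k (\<phi> t) * (q powr -t * ln q) * indicator {L..M} t) \<partial>lborel)
        \<le> (\<integral>\<^sup>+ u. ennreal (k u * indicator {0<..<1} u) \<partial>lborel)"
    and \<phi>: "\<And>a. a \<in> A \<Longrightarrow> \<phi> a \<in> {0<..<1}"
    and ratio: "\<And>a. a \<in> A \<Longrightarrow> q powr a \<le> likelihood_ratio f0 f1 (quantile F0 (\<phi> a))"
  shows "ln q * measure lborel A \<le> 1"
proof -
  define k where "k u = (if u \<in> {0<..<1} then likelihood_ratio f0 f1 (quantile F0 u) else 0)" for u
  have k_measurable: "k \<in> borel_measurable borel"
    unfolding k_def[abs_def] by (rule likelihood_ratio_quantile_measurable[OF dens0 dens1])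
  have pointwise: "ennreal (ln q) * indicator A t
      \<le> ennreal (k (\<phi> t) * (q powr -t * ln q) * indicator {L..M} t)" for t
  proof (cases "t \<in> A")
    case True
    have "ln q = q powr t * (q powr -t * ln q)"
      using q by (simp add: powr_minus field_simps)
    also have "\<dots> \<le> k (\<phi> t) * (q powr -t * ln q)"
      using ratio[OF True] \<phi>[OF True] q by (intro mult_right_mono) (auto simp: k_def)
    finally have "ln q \<le> k (\<phi> t) * (q powr -t * ln q)" .
    moreover have "t \<in> {L..M}"
      using True A(2) by blast
    ultimately show ?thesis
      using True by (simp add: ennreal_leI)
  qed simp
  have "ennreal (ln q) * emeasure lborel A = (\<integral>\<^sup>+ t. ennreal (ln q) * indicator A t \<partial>lborel)"
    using A(1) by (simp add: nn_integral_cmult_indicator)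
  also have "\<dots> \<le> (\<integral>\<^sup>+ t. ennreal (k (\<phi> t) * (q powr -t * ln q) * indicator {L..M} t) \<partial>lborel)"
    by (intro nn_integral_mono pointwise)
  also have "\<dots> \<le> (\<integral>\<^sup>+ u. ennreal (k u * indicator {0<..<1} u) \<partial>lborel)"
    by (rule substitution[OF k_measurable])
  also have "\<dots> = (\<integral>\<^sup>+ u. ennreal (likelihood_ratio f0 f1 (quantile F0 u)) * indicator {0<..<1} u \<partial>lborel)"
    by (intro nn_integral_cong) (simp add: k_def split: split_indicator)
  also have "\<dots> \<le> 1"
    by (rule nn_integral_likelihood_ratio_quantile_le_1[OF dens0 dens1])
  finally have "ennreal (ln q) * emeasure lborel A \<le> 1" .
  moreover have "emeasure lborel A = ennreal (measure lborel A)"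
    using emeasure_bounded_finite[OF bounded_subset[OF bounded_closed_interval A(2)]]
    by (intro emeasure_eq_ennreal_measure) simp
  ultimately show ?thesis
    using q by (simp add: ennreal_mult[symmetric] ennreal_le_1)
qed

lemma unif_tail_limit_likelihood_ratio_ge:
  assumes tail: "unif_tail_limit (\<lambda>q a. llr (f0 q) (f1 q) (x q a)) \<alpha>" and "0 < \<delta>"
  obtains P where "\<And>q a. P \<le> q \<Longrightarrow> 2 \<le> q \<Longrightarrow> log (real q) 2 \<le> a \<Longrightarrow> 0 < a \<Longrightarrow> a + \<delta> < \<alpha> a \<Longrightarrow>
    real q powr a \<le> likelihood_ratio (f0 q) (f1 q) (x q a)"
proof -
  obtain P where P: "\<And>q a. P \<le> q \<Longrightarrow> log (real q) 2 \<le> a \<Longrightarrow>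
      \<exists>r. llr (f0 q) (f1 q) (x q a) = ereal r \<and> \<bar>r / ln (real q) - \<alpha> a\<bar> \<le> \<delta>"
    using tail \<open>0 < \<delta>\<close> unfolding unif_tail_limit_def by blast
  have "real q powr a \<le> likelihood_ratio (f0 q) (f1 q) (x q a)"
    if "P \<le> q" "2 \<le> q" "log (real q) 2 \<le> a" "0 < a" "a + \<delta> < \<alpha> a" for q a
  proof -
    obtain r where r: "llr (f0 q) (f1 q) (x q a) = ereal r" and "\<bar>r / ln (real q) - \<alpha> a\<bar> \<le> \<delta>"
      using P[OF \<open>P \<le> q\<close> \<open>log (real q) 2 \<le> a\<close>] by blast
    then have "a < r / ln (real q)"
      using \<open>a + \<delta> < \<alpha> a\<close> by linarith
    moreover have "0 < ln (real q)"
      using \<open>2 \<le> q\<close> by simp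
    ultimately have "a * ln (real q) \<le> r" and "0 < a * ln (real q)"
      using \<open>0 < a\<close> by (simp_all add: field_simps)
    then have "exp (a * ln (real q)) \<le> likelihood_ratio (f0 q) (f1 q) (x q a)"
      by (rule exp_le_likelihood_ratio_if_llr_ge[OF r, rotated])
    then show ?thesis
      using \<open>2 \<le> q\<close> by (simp add: powr_def mult.commute)
  qed
  then show thesis
    using that by blast
qed

lemma nonpos_if_ln_mult_bounded:
  assumes "\<And>q. N \<le> q \<Longrightarrow> ln (real q) * c \<le> 1"
  shows "c \<le> 0"
proof (rule ccontr)
  assume "\<not> c \<le> 0"
  then have "0 < c"
    by simp
  have "filterlim (\<lambda>q. ln (real q)) at_top sequentially"
    by (rule filterlim_compose[OF ln_at_top filterlim_real_sequentially])
  then have "eventually (\<lambda>q. 2 / c \<le> ln (real q)) sequentially"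
    by (simp add: filterlim_at_top)
  moreover have "eventually (\<lambda>q. N \<le> q) sequentially"
    by (rule eventually_ge_at_top)
  ultimately have "eventually (\<lambda>q. 2 / c \<le> ln (real q) \<and> N \<le> q) sequentially"
    by (rule eventually_conj)
  then obtain q where "2 / c \<le> ln (real q)" "N \<le> q"
    unfolding eventually_sequentially by blast
  then show False
    using assms[of q] \<open>0 < c\<close> by (simp add: divide_le_eq)
qed

lemma esssup_tail_rate_minus_id_le_0:
  fixes F0 f0 F1 f1 :: "nat \<Rightarrow> real \<Rightarrow> real" and \<alpha> :: "real \<Rightarrow> real"
    and \<phi> :: "real \<Rightarrow> real \<Rightarrow> real"
  assumes dens0: "\<And>q. cdf_with_density (F0 q) (f0 q)"
    and dens1: "\<And>q. cdf_with_density (F1 q) (f1 q)"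
    and \<alpha>_measurable: "\<alpha> \<in> borel_measurable lebesgue"
    and tail: "unif_tail_limit (\<lambda>q a. llr (f0 q) (f1 q) (quantile (F0 q) (\<phi> (real q) a))) \<alpha>"
    and substitution: "\<And>k q L M. k \<in> borel_measurable borel \<Longrightarrow> 1 < q \<Longrightarrow> 0 < L \<Longrightarrow> L \<le> M \<Longrightarrow>
      (\<integral>\<^sup>+ t. ennreal (k (\<phi> q t) * (q powr -t * ln q) * indicator {L..M} t) \<partial>lborel)
        \<le> (\<integral>\<^sup>+ u. ennreal (k u * indicator {0<..<1} u) \<partial>lborel)"
    and \<phi>_range: "\<And>q t. 1 < q \<Longrightarrow> 0 < t \<Longrightarrow> \<phi> q t \<in> {0<..<1}"
    and p: "2 \<le> p"
  shows "esssup (restrict_space lebesgue {log (real p) 2..}) (\<lambda>a. ereal (\<alpha> a - a)) \<le> 0"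
proof (rule ccontr)
  define L where "L = log (real p) 2"
  have "0 < L"
    using p by (simp add: L_def)
  assume "\<not> ?thesis"
  then obtain A M \<delta> where A: "A \<in> sets lborel" "A \<subseteq> {L..M}" "emeasure lborel A \<noteq> 0"
    and "0 < \<delta>" and excess: "\<And>a. a \<in> A \<Longrightarrow> a + \<delta> < \<alpha> a"
    unfolding L_def by (rule excess_set_if_not_esssup_le_0[OF \<alpha>_measurable]) blast
  obtain a0 where "a0 \<in> A"
    using A(3) by fastforce
  then have "L \<le> M"
    using A(2) by auto
  have "0 < measure lborel A"
    using A emeasure_bounded_finite[OF bounded_subset[OF bounded_closed_interval A(2)]]
    by (simp add: emeasure_eq_ennreal_measure zero_less_measure_iff)
  obtain P where P: "\<And>q a. P \<le> q \<Longrightarrow> 2 \<le> q \<Longrightarrow> log (real q) 2 \<le> a \<Longrightarrow> 0 < a \<Longrightarrow> a + \<delta> < \<alpha> a \<Longrightarrow>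
      real q powr a \<le> likelihood_ratio (f0 q) (f1 q) (quantile (F0 q) (\<phi> (real q) a))"
    using unif_tail_limit_likelihood_ratio_ge[OF tail \<open>0 < \<delta>\<close>] by blast
  have bound: "ln (real q) * measure lborel A \<le> 1" if "max P p \<le> q" for q
  proof -
    have "P \<le> q" "p \<le> q"
      using that by auto
    have "1 < real q"
      using p \<open>p \<le> q\<close> by simp
    have "log (real q) 2 \<le> L"
      using p \<open>p \<le> q\<close> unfolding L_def log_def by (intro divide_left_mono mult_pos_pos) auto
    then have A_pos: "0 < a" and A_log: "log (real q) 2 \<le> a" if "a \<in> A" for a
      using that A(2) \<open>0 < L\<close> by fastforce+
    have ratio: "real q powr a \<le> likelihood_ratio (f0 q) (f1 q) (quantile (F0 q) (\<phi> (real q) a))"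
      if "a \<in> A" for a
      using p \<open>p \<le> q\<close> by (intro P[OF \<open>P \<le> q\<close> _ A_log[OF that] A_pos[OF that] excess[OF that]]) simp
    show ?thesis
      by (rule ln_mult_measure_le_1[OF dens0 dens1 A(1,2) \<open>1 < real q\<close>
            substitution[OF _ \<open>1 < real q\<close> \<open>0 < L\<close> \<open>L \<le> M\<close>] \<phi>_range[OF \<open>1 < real q\<close> A_pos] ratio])
  qed
  then have "measure lborel A \<le> 0"
    by (rule nonpos_if_ln_mult_bounded)
  with \<open>0 < measure lborel A\<close> show False
    by simp
qed

theorem lemma4:
  fixes F0 F1 f0 f1 :: "nat \<Rightarrow> nat \<Rightarrow> real \<Rightarrow> real"
    and \<alpha>m \<alpha>p :: "nat \<Rightarrow> real \<Rightarrow> real"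
  assumes dens0: "\<And>k p. k \<in> {1,2} \<Longrightarrow> cdf_with_density (F0 k p) (f0 k p)"
    and dens1: "\<And>k p. k \<in> {1,2} \<Longrightarrow> cdf_with_density (F1 k p) (f1 k p)"
    and meas_m: "\<And>k. k \<in> {1,2} \<Longrightarrow> \<alpha>m k \<in> borel_measurable lebesgue"
    and meas_p: "\<And>k. k \<in> {1,2} \<Longrightarrow> \<alpha>p k \<in> borel_measurable lebesgue"
    and pos: "\<And>k. k \<in> {1,2} \<Longrightarrow> emeasure lebesgue {a. 0 < max (\<alpha>m k a) (\<alpha>p k a)} > 0"
    and tail_m: "\<And>k. k \<in> {1,2} \<Longrightarrow>
      unif_tail_limit (\<lambda>p a. llr (f0 k p) (f1 k p) (quantile (F0 k p) (real p powr (-a)))) (\<alpha>m k)"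
    and tail_p: "\<And>k. k \<in> {1,2} \<Longrightarrow>
      unif_tail_limit (\<lambda>p a. llr (f0 k p) (f1 k p) (quantile (F0 k p) (1 - real p powr (-a)))) (\<alpha>p k)"
  shows "\<forall>k\<in>{1,2}. \<forall>p::nat. p \<ge> 2 \<longrightarrow>
           esssup (restrict_space lebesgue {log (real p) 2..}) (\<lambda>a. ereal (\<alpha>m k a - a)) \<le> 0 \<and>
           esssup (restrict_space lebesgue {log (real p) 2..}) (\<lambda>a. ereal (\<alpha>p k a - a)) \<le> 0"
proof (intro ballI allI impI conjI)
  fix k p assume k: "k \<in> {1::nat,2}" and p: "2 \<le> (p::nat)"
  have lower: "q powr -t \<in> {0<..<1}" and upper: "1 - q powr -t \<in> {0<..<1}"
    if "1 < q" "0 < t" for q t :: real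
    using that by (auto simp: powr_less_one)
  show "esssup (restrict_space lebesgue {log (real p) 2..}) (\<lambda>a. ereal (\<alpha>m k a - a)) \<le> 0"
    by (rule esssup_tail_rate_minus_id_le_0[where \<phi>="\<lambda>q a. q powr -a",
          OF dens0[OF k] dens1[OF k] meas_m[OF k] tail_m[OF k] nn_integral_lower_tail_substitution lower p])
  show "esssup (restrict_space lebesgue {log (real p) 2..}) (\<lambda>a. ereal (\<alpha>p k a - a)) \<le> 0"
    by (rule esssup_tail_rate_minus_id_le_0[where \<phi>="\<lambda>q a. 1 - q powr -a",
          OF dens0[OF k] dens1[OF k] meas_p[OF k] tail_p[OF k] nn_integral_upper_tail_substitution upper p])
qed

end
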